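(* Fix $n\geq1$. Let $\alpha>\beta>0$ and $\delta>0$. Let $\mu$ be a Borel probability measure on $B(0,1)\subset\mathbb R^n$ such that for $j=1,\dots,n$, \[\sup_{a\in\mathbb R}\mu\{x: x^j\in B_{\mathbb R}(a,\delta)\}\leq\delta^{\alpha}.\] Let $K>2$ and let $\nu$ be a Borel probability measure supported in $B(0,K)$ such that \[\int_{B(0,2\delta^{-1})}|\hat\nu(\xi)|\,d\xi\leq\delta^{-\beta}.\] Then there is a constant $c$ depending only on $K$ and $n$ such that for all $\xi\in\mathbb R^n$ with $\|\xi\|\in[\delta^{-1}/2,\delta^{-1}]$, \[\int|\hat\nu(x\xi)|\,d\mu(x)\leq c\,\delta^{\frac{\alpha-\beta}{n+2}}.\]
   Context: $\mathbb R^n$ carries the standard scalar product, Euclidean norm and coordinatewise multiplication ($x\xi=(x^1\xi^1,\dots,x^n\xi^n)$). $\hat\nu(\xi)=\int e^{2i\pi\langle\xi,x\rangle}d\nu(x)$. $B(0,r)$ is the closed Euclidean ball and $B_{\mathbb R}(a,\delta)=[a-\delta,a+\delta]$. *)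

theory Defs
  imports "HOL-Analysis.Analysis" "HOL-Probability.Probability"
begin

definition fourier_meas :: "(real^'n) measure \<Rightarrow> real^'n \<Rightarrow> complex" where
  "fourier_meas nu \<xi> = (\<integral>x. cis (2 * pi * (\<xi> \<bullet> x)) \<partial>nu)"

definition coord_mult :: "real^'n \<Rightarrow> real^'n \<Rightarrow> real^'n" where
  "coord_mult x \<xi> = (\<chi> i. x $ i * \<xi> $ i)"

end

theory Submission
  imports Defs
begin

text \<open>
  Since \<open>\<nu>\<close> lives in \<open>B(0,K)\<close>, \<open>|\<nu>^|\<close> is \<open>2\<pi>K\<close>-Lipschitz, so \<open>|\<nu>^(x\<xi>)|\<close> is at most the
  average of \<open>|\<nu>^|\<close> over the ball \<open>B(x\<xi>, r)\<close> plus \<open>2\<pi>Kr\<close>. Integrate in \<open>x\<close> and swap the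
  integrals: a frequency \<open>z\<close> is seen only by those \<open>x\<close> with \<open>|x\<^sup>j\<xi>\<^sup>j - z\<^sup>j| \<le> r\<close>, where \<open>j\<close> is
  a coordinate with \<open>|\<xi>\<^sup>j| \<ge> |\<xi>|/n\<close>. For \<open>r \<le> \<delta>|\<xi>\<^sup>j|\<close> this is a slab of width \<open>2\<delta>\<close> in the
  \<open>j\<close>-th coordinate, of \<open>\<mu>\<close>-mass at most \<open>\<delta>\<^sup>\<alpha>\<close>, and all such \<open>z\<close> lie in \<open>B(0, 2/\<delta>)\<close>. Hence the
  integral is at most \<open>\<delta>\<^sup>\<alpha>\<delta>\<^sup>-\<^sup>\<beta> / vol B(0,r) + 2\<pi>Kr\<close>, and \<open>r = \<delta>\<^sup>\<gamma>/(2n)\<close> with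
  \<open>\<gamma> = (\<alpha>-\<beta>)/(n+2)\<close> makes both terms \<open>O(\<delta>\<^sup>\<gamma>)\<close>. For \<open>\<delta> > 1\<close> the bound \<open>|\<nu>^| \<le> 1\<close> suffices.
\<close>

lemma cmod_cis_diff_le: "cmod (cis a - cis b) \<le> \<bar>a - b\<bar>"
proof -
  have "cis a - cis b = cis b * (cis (a - b) - 1)"
    by (simp add: algebra_simps cis_mult)
  moreover have "cmod (cis (a - b) - 1) \<le> \<bar>a - b\<bar>"
    using iexp_approx1[of "a - b" 0] by (simp add: cis_conv_exp)
  ultimately show ?thesis
    by (simp add: norm_mult)
qed

lemma integrable_cis_inner:
  fixes \<nu> :: "'a::euclidean_space measure"
  assumes "finite_measure \<nu>" "sets \<nu> = sets borel"
  shows "integrable \<nu> (\<lambda>x. cis (2 * pi * (\<xi> \<bullet> x)))"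
proof -
  interpret finite_measure \<nu> by fact
  have "(\<lambda>x. cis (2 * pi * (\<xi> \<bullet> x))) \<in> borel_measurable \<nu>"
    unfolding measurable_cong_sets[OF assms(2) refl]
    by (intro borel_measurable_continuous_onI continuous_intros)
  then show ?thesis
    by (intro integrable_const_bound[where B=1]) auto
qed

lemma norm_fourier_meas_le_1:
  assumes "prob_space \<nu>" "sets \<nu> = sets borel"
  shows "cmod (fourier_meas \<nu> \<xi>) \<le> 1"
proof -
  interpret prob_space \<nu> by fact
  have "cmod (fourier_meas \<nu> \<xi>) \<le> (\<integral>x. cmod (cis (2 * pi * (\<xi> \<bullet> x))) \<partial>\<nu>)"
    unfolding fourier_meas_def by (rule integral_norm_bound)
  then show ?thesis
    by (simp add: prob_space)
qed

lemma lipschitz_fourier_meas: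
  assumes \<nu>: "prob_space \<nu>" "sets \<nu> = sets borel" "measure \<nu> (cball 0 K) = 1"
  shows "(2 * pi * K)-lipschitz_on UNIV (fourier_meas \<nu>)"
proof (rule lipschitz_onI)
  interpret prob_space \<nu> by fact
  have "cball 0 K \<noteq> {}"
    using \<nu>(3) by auto
  then show K: "0 \<le> 2 * pi * K"
    by simp
  fix \<xi> \<eta> :: "real^'a"
  have "dist (fourier_meas \<nu> \<xi>) (fourier_meas \<nu> \<eta>)
      = cmod (\<integral>x. cis (2 * pi * (\<xi> \<bullet> x)) - cis (2 * pi * (\<eta> \<bullet> x)) \<partial>\<nu>)"
    unfolding fourier_meas_def dist_norm
    using integrable_cis_inner[OF finite_measure_axioms \<nu>(2)] by simp
  also have "\<dots> \<le> (\<integral>x. cmod (cis (2 * pi * (\<xi> \<bullet> x)) - cis (2 * pi * (\<eta> \<bullet> x))) \<partial>\<nu>)"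
    by (rule integral_norm_bound)
  also have "\<dots> \<le> 2 * pi * K * dist \<xi> \<eta>"
  proof (rule integral_le_const)
    show "AE x in \<nu>. cmod (cis (2 * pi * (\<xi> \<bullet> x)) - cis (2 * pi * (\<eta> \<bullet> x))) \<le> 2 * pi * K * dist \<xi> \<eta>"
      using AE_prob_1[OF \<nu>(3)]
    proof eventually_elim
      case (elim x)
      have "cmod (cis (2 * pi * (\<xi> \<bullet> x)) - cis (2 * pi * (\<eta> \<bullet> x)))
          \<le> \<bar>2 * pi * (\<xi> \<bullet> x) - 2 * pi * (\<eta> \<bullet> x)\<bar>"
        by (rule cmod_cis_diff_le)
      also have "\<dots> = 2 * pi * \<bar>(\<xi> - \<eta>) \<bullet> x\<bar>"
        by (simp add: inner_diff_left abs_mult flip: right_diff_distrib)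
      also have "\<dots> \<le> 2 * pi * (dist \<xi> \<eta> * K)"
        using elim Cauchy_Schwarz_ineq2[of "\<xi> - \<eta>" x]
          mult_left_mono[of "norm x" K "norm (\<xi> - \<eta>)"]
        by (simp add: dist_norm)
      finally show ?case
        by (simp add: algebra_simps)
    qed
  qed (use integrable_cis_inner[OF finite_measure_axioms \<nu>(2)] in simp)
  finally show "dist (fourier_meas \<nu> \<xi>) (fourier_meas \<nu> \<eta>) \<le> 2 * pi * K * dist \<xi> \<eta>" .
qed

lemma lipschitz_norm_fourier_meas:
  assumes "prob_space \<nu>" "sets \<nu> = sets borel" "measure \<nu> (cball 0 K) = 1"
  shows "(2 * pi * K)-lipschitz_on UNIV (\<lambda>\<xi>. cmod (fourier_meas \<nu> \<xi>))"
proof -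
  have "1-lipschitz_on (range (fourier_meas \<nu>)) cmod"
    by (rule lipschitz_onI) (auto simp: dist_norm norm_triangle_ineq3)
  from lipschitz_on_compose2[OF lipschitz_fourier_meas[OF assms] this] show ?thesis
    by simp
qed

lemma lipschitz_le_ball_average:
  fixes f :: "'a::euclidean_space \<Rightarrow> real"
  assumes lip: "L-lipschitz_on UNIV f" and nonneg: "\<And>z. 0 \<le> f z"
  shows "ennreal (f y) * emeasure lborel (cball y r)
    \<le> (\<integral>\<^sup>+z\<in>cball y r. f z \<partial>lborel) + ennreal (L * r) * emeasure lborel (cball y r)"
proof -
  have [measurable]: "f \<in> borel_measurable borel"
    using lipschitz_on_continuous_on[OF lip] by (rule borel_measurable_continuous_onI)
  have "ennreal (f y) * emeasure lborel (cball y r) = (\<integral>\<^sup>+z\<in>cball y r. f y \<partial>lborel)"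
    by (simp add: nn_integral_cmult_indicator)
  also have "\<dots> \<le> (\<integral>\<^sup>+z\<in>cball y r. ennreal (f z) + ennreal (L * r) \<partial>lborel)"
  proof (intro nn_integral_mono)
    fix z
    show "ennreal (f y) * indicator (cball y r) z
        \<le> (ennreal (f z) + ennreal (L * r)) * indicator (cball y r) z"
    proof (cases "z \<in> cball y r")
      case True
      then have "f y \<le> f z + L * r"
        using lipschitz_onD[OF lip, of y z] mult_left_mono[of "dist y z" r L] lipschitz_on_nonneg[OF lip]
        by (simp add: dist_real_def abs_le_iff)
      then have "ennreal (f y) \<le> ennreal (f z + L * r)"
        by (rule ennreal_leI)
      moreover have "0 \<le> L * r"
        using True lipschitz_on_nonneg[OF lip] zero_le_dist[of y z] by (simp del: zero_le_dist)
      ultimately show ?thesis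
        using True nonneg[of z] by (simp add: ennreal_plus)
    qed simp
  qed
  also have "\<dots> = (\<integral>\<^sup>+z\<in>cball y r. f z \<partial>lborel) + ennreal (L * r) * emeasure lborel (cball y r)"
    by (simp add: nn_set_integral_add nn_integral_cmult_indicator)
  finally show ?thesis .
qed

lemma nn_set_integral_eq_set_integral_compact:
  fixes f :: "'a::euclidean_space \<Rightarrow> real"
  assumes "compact S" "continuous_on S f" "\<And>x. x \<in> S \<Longrightarrow> 0 \<le> f x"
  shows "(\<integral>\<^sup>+x\<in>S. f x \<partial>lborel) = ennreal (\<integral>x\<in>S. f x \<partial>lborel)"
proof -
  have "integrable lborel (\<lambda>x. indicator S x *\<^sub>R f x)"
    using assms(1,2) by (rule borel_integrable_compact)
  then show ?thesis
    unfolding set_lebesgue_integral_def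
    by (subst nn_integral_eq_integral[symmetric])
      (auto intro!: nn_integral_cong simp: assms(3) split: split_indicator)
qed

lemma powr_div_power_powr_le:
  fixes \<delta> \<gamma> c :: real
  assumes "0 < \<delta>" "\<delta> \<le> 1" "0 \<le> \<gamma>" "0 < c"
  shows "\<delta> powr ((real n + 2) * \<gamma>) / (\<delta> powr \<gamma> / c) ^ n \<le> c ^ n * \<delta> powr \<gamma>"
proof -
  have "(\<delta> powr \<gamma> / c) ^ n = \<delta> powr (n * \<gamma>) / c ^ n"
    using assms by (simp add: power_divide powr_powr mult.commute flip: powr_realpow)
  moreover have "\<delta> powr ((real n + 2) * \<gamma>) = \<delta> powr (n * \<gamma>) * \<delta> powr (2 * \<gamma>)"
    by (simp add: algebra_simps flip: powr_add)
  ultimately have "\<delta> powr ((real n + 2) * \<gamma>) / (\<delta> powr \<gamma> / c) ^ n = c ^ n * \<delta> powr (2 * \<gamma>)"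
    using assms by simp
  also have "\<dots> \<le> c ^ n * \<delta> powr \<gamma>"
    using assms by (intro mult_left_mono powr_mono') auto
  finally show ?thesis .
qed

lemma borel_measurable_indicator_cball_pair:
  fixes \<phi> :: "'a::euclidean_space \<Rightarrow> 'b::euclidean_space"
  assumes [measurable]: "\<phi> \<in> borel_measurable borel" "F \<in> borel_measurable borel"
  shows "(\<lambda>(x, z). F z * indicator (cball (\<phi> x) r) z :: ennreal) \<in> borel_measurable (borel \<Otimes>\<^sub>M borel)"
proof -
  have "(\<lambda>(x, z). F z * indicator (cball (\<phi> x) r) z)
      = (\<lambda>p. F (snd p) * indicator {p. dist (\<phi> (fst p)) (snd p) \<le> r} p)"
    by (auto simp: fun_eq_iff split: split_indicator)
  then show ?thesis
    by simp
qed

lemma borel_measurable_nn_integral_cball: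
  fixes \<phi> :: "'a::euclidean_space \<Rightarrow> 'b::euclidean_space"
  assumes "\<phi> \<in> borel_measurable borel" "F \<in> borel_measurable borel"
  shows "(\<lambda>x. \<integral>\<^sup>+z\<in>cball (\<phi> x) r. F z \<partial>lborel) \<in> borel_measurable borel"
proof (rule lborel.borel_measurable_nn_integral)
  have "sets (borel \<Otimes>\<^sub>M lborel) = sets (borel \<Otimes>\<^sub>M (borel :: 'b measure))"
    by (rule sets_pair_measure_cong) simp_all
  then show "(\<lambda>(x, z). F z * indicator (cball (\<phi> x) r) z) \<in> borel_measurable (borel \<Otimes>\<^sub>M lborel)"
    using borel_measurable_indicator_cball_pair[OF assms] measurable_cong_sets by blast
qed

lemma coord_mult_nth [simp]: "coord_mult x \<xi> $ i = x $ i * \<xi> $ i"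
  by (simp add: coord_mult_def)

lemma borel_measurable_coord_mult [measurable]: "(\<lambda>x. coord_mult x \<xi>) \<in> borel_measurable borel"
  unfolding coord_mult_def
  by (intro borel_measurable_continuous_onI continuous_on_vec_lambda continuous_intros)

lemma norm_coord_mult_le: "norm x \<le> 1 \<Longrightarrow> norm (coord_mult x \<xi>) \<le> norm \<xi>"
proof (rule norm_le_componentwise_cart)
  fix i assume "norm x \<le> 1"
  then have "\<bar>x $ i\<bar> \<le> 1"
    using component_le_norm_cart[of x i] by simp
  then show "norm (coord_mult x \<xi> $ i) \<le> norm (\<xi> $ i)"
    by (simp add: abs_mult mult_left_le_one_le)
qed

lemma cball_coord_mult_subset:
  assumes "norm x \<le> 1" "norm \<xi> + r \<le> R"
  shows "cball (coord_mult x \<xi>) r \<subseteq> cball 0 R"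
proof
  fix z assume "z \<in> cball (coord_mult x \<xi>) r"
  then have "norm z \<le> norm (coord_mult x \<xi>) + r"
    using norm_triangle_ineq2[of z "coord_mult x \<xi>"] by (simp add: dist_norm norm_minus_commute)
  then show "z \<in> cball 0 R"
    using norm_coord_mult_le[OF assms(1), of \<xi>] assms(2) by simp
qed

lemma exists_coord_norm_le:
  fixes \<xi> :: "real^'n"
  obtains j where "norm \<xi> \<le> CARD('n) * \<bar>\<xi> $ j\<bar>"
proof -
  have "Max (range (\<lambda>i. \<bar>\<xi> $ i\<bar>)) \<in> range (\<lambda>i. \<bar>\<xi> $ i\<bar>)"
    by (intro Max_in) auto
  then obtain j where j: "\<bar>\<xi> $ j\<bar> = Max (range (\<lambda>i. \<bar>\<xi> $ i\<bar>))"
    by (metis rangeE)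
  have "norm \<xi> \<le> (\<Sum>i\<in>UNIV. \<bar>\<xi> $ i\<bar>)"
    by (rule norm_le_l1_cart)
  also have "\<dots> \<le> (\<Sum>i\<in>(UNIV::'n set). \<bar>\<xi> $ j\<bar>)"
    unfolding j by (intro sum_mono Max_ge) auto
  finally show ?thesis
    using that by simp
qed

lemma nn_integral_cball_coord_mult_le:
  fixes \<mu> :: "(real^'n) measure" and F :: "real^'n \<Rightarrow> ennreal"
  assumes \<mu>: "finite_measure \<mu>" "sets \<mu> = sets borel"
    and F [measurable]: "F \<in> borel_measurable borel"
    and \<xi>: "\<xi> $ j \<noteq> 0" "r \<le> \<delta> * \<bar>\<xi> $ j\<bar>"
    and slab: "\<And>a. measure \<mu> {x. x $ j \<in> {a - \<delta> .. a + \<delta>}} \<le> s"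
  shows "(\<integral>\<^sup>+x. (\<integral>\<^sup>+z\<in>cball (coord_mult x \<xi>) r. F z \<partial>lborel) \<partial>\<mu>)
    \<le> ennreal s * (\<integral>\<^sup>+z. F z \<partial>lborel)"
proof -
  interpret \<mu>: finite_measure \<mu> by fact
  interpret pair_sigma_finite \<mu> "lborel :: (real^'n) measure"
    by (intro pair_sigma_finite.intro \<mu>.sigma_finite_measure_axioms lborel.sigma_finite_measure_axioms)
  have "sets (\<mu> \<Otimes>\<^sub>M lborel) = sets (borel \<Otimes>\<^sub>M (borel :: (real^'n) measure))"
    by (rule sets_pair_measure_cong) (simp_all add: \<mu>)
  then have "(\<lambda>(x, z). F z * indicator (cball (coord_mult x \<xi>) r) z) \<in> borel_measurable (\<mu> \<Otimes>\<^sub>M lborel)"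
    using borel_measurable_indicator_cball_pair[OF borel_measurable_coord_mult F] measurable_cong_sets
    by blast
  then have "(\<integral>\<^sup>+x. (\<integral>\<^sup>+z\<in>cball (coord_mult x \<xi>) r. F z \<partial>lborel) \<partial>\<mu>)
      = (\<integral>\<^sup>+z. (\<integral>\<^sup>+x. F z * indicator (cball (coord_mult x \<xi>) r) z \<partial>\<mu>) \<partial>lborel)"
    by (rule Fubini'[symmetric])
  also have "\<dots> \<le> (\<integral>\<^sup>+z. ennreal s * F z \<partial>lborel)"
  proof (rule nn_integral_mono)
    fix z :: "real^'n"
    define T where "T = {x :: real^'n. x $ j \<in> {z $ j / \<xi> $ j - \<delta> .. z $ j / \<xi> $ j + \<delta>}}"
    have [measurable]: "T \<in> sets borel"
      unfolding T_def by measurable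
    have "x \<in> T" if "z \<in> cball (coord_mult x \<xi>) r" for x
    proof -
      have "\<bar>x $ j * \<xi> $ j - z $ j\<bar> \<le> r"
        using that component_le_norm_cart[of "coord_mult x \<xi> - z" j] by (simp add: dist_norm)
      also have "x $ j * \<xi> $ j - z $ j = (x $ j - z $ j / \<xi> $ j) * \<xi> $ j"
        using \<xi>(1) by (simp add: field_simps)
      finally have "\<bar>x $ j - z $ j / \<xi> $ j\<bar> * \<bar>\<xi> $ j\<bar> \<le> \<delta> * \<bar>\<xi> $ j\<bar>"
        using \<xi>(2) by (simp add: abs_mult)
      then show ?thesis
        using \<xi>(1) unfolding T_def by (simp add: abs_le_iff)
    qed
    then have "(\<integral>\<^sup>+x. F z * indicator (cball (coord_mult x \<xi>) r) z \<partial>\<mu>) \<le> (\<integral>\<^sup>+x. F z * indicator T x \<partial>\<mu>)"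
      by (intro nn_integral_mono) (auto split: split_indicator)
    also have "\<dots> = F z * emeasure \<mu> T"
      by (simp add: nn_integral_cmult_indicator \<mu>)
    also have "\<dots> \<le> F z * ennreal s"
      using slab unfolding T_def \<mu>.emeasure_eq_measure by (intro mult_left_mono ennreal_leI) auto
    finally show "(\<integral>\<^sup>+x. F z * indicator (cball (coord_mult x \<xi>) r) z \<partial>\<mu>) \<le> ennreal s * F z"
      by (simp add: mult.commute)
  qed
  also have "\<dots> = ennreal s * (\<integral>\<^sup>+z. F z \<partial>lborel)"
    by (rule nn_integral_cmult) simp
  finally show ?thesis .
qed

lemma integral_norm_fourier_coord_mult_le:
  fixes \<mu> \<nu> :: "(real^'n) measure"
  assumes \<nu>: "prob_space \<nu>" "sets \<nu> = sets borel" "measure \<nu> (cball 0 K) = 1"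
    and \<mu>: "prob_space \<mu>" "sets \<mu> = sets borel" "measure \<mu> (cball 0 1) = 1"
    and slab: "\<And>a. measure \<mu> {x. x $ j \<in> {a - \<delta> .. a + \<delta>}} \<le> s"
    and \<xi>: "\<xi> $ j \<noteq> 0" and r: "0 < r" "r \<le> \<delta> * \<bar>\<xi> $ j\<bar>" and R: "norm \<xi> + r \<le> R"
  shows "(\<integral>x. cmod (fourier_meas \<nu> (coord_mult x \<xi>)) \<partial>\<mu>)
    \<le> s * (\<integral>\<zeta>\<in>cball 0 R. cmod (fourier_meas \<nu> \<zeta>) \<partial>lborel) / (unit_ball_vol CARD('n) * r ^ CARD('n))
      + 2 * pi * K * r"
proof -
  interpret \<mu>: prob_space \<mu> by fact
  define F where "F \<zeta> = cmod (fourier_meas \<nu> \<zeta>)" for \<zeta>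
  define V where "V = unit_ball_vol CARD('n) * r ^ CARD('n)"
  define J where "J = (\<integral>\<zeta>\<in>cball 0 R. F \<zeta> \<partial>lborel)"
  have lip: "(2 * pi * K)-lipschitz_on UNIV F"
    unfolding F_def by (rule lipschitz_norm_fourier_meas[OF \<nu>])
  have F_cont: "continuous_on S F" for S
    using lipschitz_on_continuous_on[OF lip] continuous_on_subset by blast
  have [measurable]: "F \<in> borel_measurable borel"
    by (rule borel_measurable_continuous_onI[OF F_cont])
  have F_R: "(\<lambda>z. ennreal (F z) * indicator (cball 0 R) z) \<in> borel_measurable borel"
    by measurable (simp add: pred_def)
  have K: "0 \<le> K"
    using lipschitz_on_nonneg[OF lip] pi_gt_zero by (simp add: zero_le_mult_iff)
  have V: "0 < V" and s: "0 \<le> s"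
    using r order_trans[OF measure_nonneg slab] by (auto simp: V_def)
  have J: "(\<integral>\<^sup>+z\<in>cball 0 R. F z \<partial>lborel) = ennreal J"
    unfolding J_def using F_cont by (intro nn_set_integral_eq_set_integral_compact) (simp_all add: F_def)
  have J_nonneg: "0 \<le> J"
    unfolding J_def F_def set_lebesgue_integral_def by simp
  have average: "ennreal (F y * V) \<le> (\<integral>\<^sup>+z\<in>cball y r. F z \<partial>lborel) + ennreal (2 * pi * K * r * V)" for y
    using lipschitz_le_ball_average[OF lip, of y r] emeasure_cball[of r y] V r K
    by (simp add: F_def V_def ennreal_mult' mult.assoc)
  define G where "G x = (\<integral>\<^sup>+z\<in>cball (coord_mult x \<xi>) r. ennreal (F z) * indicator (cball 0 R) z \<partial>lborel)"
    for x
  have G: "G \<in> borel_measurable \<mu>"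
    unfolding G_def measurable_cong_sets[OF \<mu>(2) refl]
    by (rule borel_measurable_nn_integral_cball[OF borel_measurable_coord_mult F_R])
  have "AE x in \<mu>. ennreal (F (coord_mult x \<xi>) * V) \<le> G x + ennreal (2 * pi * K * r * V)"
    using \<mu>.AE_prob_1[OF \<mu>(3)]
  proof eventually_elim
    case (elim x)
    have "(\<integral>\<^sup>+z\<in>cball (coord_mult x \<xi>) r. F z \<partial>lborel) = G x"
      unfolding G_def using cball_coord_mult_subset[of x \<xi> r R] elim R
      by (intro nn_integral_cong) (auto split: split_indicator)
    with average[of "coord_mult x \<xi>"] show ?case
      by simp
  qed
  then have "(\<integral>\<^sup>+x. ennreal (F (coord_mult x \<xi>) * V) \<partial>\<mu>) \<le> (\<integral>\<^sup>+x. G x + ennreal (2 * pi * K * r * V) \<partial>\<mu>)"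
    by (rule nn_integral_mono_AE)
  also have "\<dots> = (\<integral>\<^sup>+x. G x \<partial>\<mu>) + ennreal (2 * pi * K * r * V)"
    using G by (simp add: nn_integral_add \<mu>.emeasure_space_1)
  also have "\<dots> \<le> ennreal s * ennreal J + ennreal (2 * pi * K * r * V)"
    unfolding G_def J[symmetric]
    by (intro add_right_mono nn_integral_cball_coord_mult_le[OF \<mu>.finite_measure_axioms \<mu>(2) F_R \<xi> r(2) slab])
  also have "\<dots> = ennreal (s * J + 2 * pi * K * r * V)"
    using s K r V J_nonneg by (subst ennreal_plus) (auto simp: ennreal_mult)
  finally have "(\<integral>x. F (coord_mult x \<xi>) * V \<partial>\<mu>) \<le> s * J + 2 * pi * K * r * V"
    by (intro integral_real_bounded) (use s K r V J_nonneg in simp)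
  then have "(\<integral>x. F (coord_mult x \<xi>) \<partial>\<mu>) \<le> s * J / V + 2 * pi * K * r"
    using V by (simp add: field_simps)
  then show ?thesis
    unfolding F_def J_def V_def .
qed

lemma integral_norm_fourier_meas_le_1:
  assumes "prob_space \<mu>" "prob_space \<nu>" "sets \<nu> = sets borel"
  shows "(\<integral>x. cmod (fourier_meas \<nu> (f x)) \<partial>\<mu>) \<le> 1"
proof (rule integral_real_bounded)
  interpret prob_space \<mu> by fact
  have "(\<integral>\<^sup>+x. ennreal (cmod (fourier_meas \<nu> (f x))) \<partial>\<mu>) \<le> (\<integral>\<^sup>+x. 1 \<partial>\<mu>)"
    using norm_fourier_meas_le_1[OF assms(2,3)] by (intro nn_integral_mono) simp
  then show "(\<integral>\<^sup>+x. ennreal (cmod (fourier_meas \<nu> (f x))) \<partial>\<mu>) \<le> ennreal 1"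
    by (simp add: emeasure_space_1)
qed simp

lemma exists_coord_radius_le:
  fixes \<xi> :: "real^'n"
  assumes \<delta>: "0 < \<delta>" "\<delta> \<le> 1" and \<xi>: "1 / (2 * \<delta>) \<le> norm \<xi>" "norm \<xi> \<le> 1 / \<delta>"
    and t: "0 < t" "t \<le> 1"
  obtains j where "\<xi> $ j \<noteq> 0" "t / (2 * real CARD('n)) \<le> \<delta> * \<bar>\<xi> $ j\<bar>"
    "norm \<xi> + t / (2 * real CARD('n)) \<le> 2 / \<delta>"
proof -
  define n where "n = real CARD('n)"
  have n: "1 \<le> n"
    unfolding n_def by simp
  obtain j where j: "norm \<xi> \<le> n * \<bar>\<xi> $ j\<bar>"
    unfolding n_def by (rule exists_coord_norm_le)
  have "1 / (2 * \<delta>) \<le> n * \<bar>\<xi> $ j\<bar>"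
    using j \<xi>(1) by linarith
  then have "1 / (2 * n) \<le> \<delta> * \<bar>\<xi> $ j\<bar>" "\<xi> $ j \<noteq> 0"
    using \<delta> n by (auto simp: field_simps)
  moreover have "t / (2 * n) \<le> 1 / (2 * n)"
    using t n by (simp add: divide_right_mono)
  moreover have "1 / (2 * n) \<le> 1 / \<delta>"
    using n \<delta> by (simp add: field_simps)
  ultimately show ?thesis
    using that \<xi>(2) unfolding n_def by fastforce
qed

lemma integral_norm_fourier_coord_mult_le_powr:
  fixes \<mu> \<nu> :: "(real^'n) measure" and \<xi> :: "real^'n"
  assumes \<nu>: "prob_space \<nu>" "sets \<nu> = sets borel" "measure \<nu> (cball 0 K) = 1"
    and \<mu>: "prob_space \<mu>" "sets \<mu> = sets borel" "measure \<mu> (cball 0 1) = 1"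
    and slab: "\<And>j a. measure \<mu> {x. x $ j \<in> {a - \<delta> .. a + \<delta>}} \<le> \<delta> powr \<alpha>"
    and decay: "(\<integral>\<zeta>\<in>cball 0 (2 / \<delta>). cmod (fourier_meas \<nu> \<zeta>) \<partial>lborel) \<le> \<delta> powr (-\<beta>)"
    and \<alpha>\<beta>: "\<beta> < \<alpha>" and \<delta>: "0 < \<delta>" "\<delta> \<le> 1"
    and \<xi>: "1 / (2 * \<delta>) \<le> norm \<xi>" "norm \<xi> \<le> 1 / \<delta>"
  shows "(\<integral>x. cmod (fourier_meas \<nu> (coord_mult x \<xi>)) \<partial>\<mu>)
    \<le> ((2 * real CARD('n)) ^ CARD('n) / unit_ball_vol CARD('n) + 2 * pi * K)
        * \<delta> powr ((\<alpha> - \<beta>) / (real CARD('n) + 2))"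
proof -
  define n where "n = CARD('n)"
  define \<gamma> where "\<gamma> = (\<alpha> - \<beta>) / (real n + 2)"
  define r where "r = \<delta> powr \<gamma> / (2 * real n)"
  define J where "J = (\<integral>\<zeta>\<in>cball 0 (2 / \<delta>). cmod (fourier_meas \<nu> \<zeta>) \<partial>lborel)"
  have n: "0 < n"
    unfolding n_def by simp
  have \<gamma>: "0 < \<gamma>"
    unfolding \<gamma>_def using \<alpha>\<beta> by simp
  have \<delta>\<gamma>: "0 < \<delta> powr \<gamma>" "\<delta> powr \<gamma> \<le> 1"
    using \<delta> \<gamma> by (simp_all add: powr_le1)
  have r: "0 < r"
    unfolding r_def using \<delta>\<gamma> n by simp
  obtain j where \<xi>j: "\<xi> $ j \<noteq> 0" and r_le: "r \<le> \<delta> * \<bar>\<xi> $ j\<bar>" and R: "norm \<xi> + r \<le> 2 / \<delta>"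
    unfolding r_def n_def using exists_coord_radius_le[OF \<delta> \<xi> \<delta>\<gamma>] .
  have "(\<integral>x. cmod (fourier_meas \<nu> (coord_mult x \<xi>)) \<partial>\<mu>)
      \<le> \<delta> powr \<alpha> * J / (unit_ball_vol n * r ^ n) + 2 * pi * K * r"
    unfolding J_def n_def by (rule integral_norm_fourier_coord_mult_le[OF \<nu> \<mu> slab \<xi>j r r_le R])
  also have "\<delta> powr \<alpha> * J / (unit_ball_vol n * r ^ n) \<le> (2 * real n) ^ n / unit_ball_vol n * \<delta> powr \<gamma>"
  proof -
    have "\<delta> powr \<alpha> * J \<le> \<delta> powr (\<alpha> - \<beta>)"
      using decay \<delta> by (simp add: J_def powr_diff powr_minus divide_inverse mult_left_mono)
    also have "\<alpha> - \<beta> = (real n + 2) * \<gamma>"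
      unfolding \<gamma>_def by (simp add: add_pos_pos)
    finally have "\<delta> powr \<alpha> * J / (unit_ball_vol n * r ^ n)
        \<le> \<delta> powr ((real n + 2) * \<gamma>) / (unit_ball_vol n * r ^ n)"
      using r by (intro divide_right_mono mult_nonneg_nonneg) simp_all
    also have "\<dots> = \<delta> powr ((real n + 2) * \<gamma>) / (\<delta> powr \<gamma> / (2 * real n)) ^ n / unit_ball_vol n"
      by (simp add: r_def ac_simps)
    also have "\<dots> \<le> (2 * real n) ^ n * \<delta> powr \<gamma> / unit_ball_vol n"
      by (rule divide_right_mono[OF powr_div_power_powr_le]) (use \<delta> \<gamma> n in auto)
    finally show ?thesis
      by simp
  qed
  also have "2 * pi * K * r \<le> 2 * pi * K * \<delta> powr \<gamma>"
  proof (rule mult_left_mono)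
    show "r \<le> \<delta> powr \<gamma>"
      unfolding r_def using \<delta>\<gamma> n by (simp add: divide_le_eq)
    show "0 \<le> 2 * pi * K"
      using lipschitz_on_nonneg[OF lipschitz_fourier_meas[OF \<nu>]] .
  qed
  finally show ?thesis
    unfolding n_def \<gamma>_def by (simp add: distrib_right)
qed

theorem lemma3p16:
  fixes K :: real
  assumes "K > 2"
  shows "\<exists>c::real. \<forall>(\<alpha>::real) (\<beta>::real) (\<delta>::real) (\<mu>::(real^'n) measure) (\<nu>::(real^'n) measure) (\<xi>::real^'n).
     (\<alpha> > \<beta> \<and> \<beta> > 0 \<and> \<delta> > 0
      \<and> prob_space \<mu> \<and> sets \<mu> = sets borel \<and> measure \<mu> (cball 0 1) = 1
      \<and> (\<forall>j. \<forall>a. measure \<mu> {x. x $ j \<in> {a - \<delta> .. a + \<delta>}} \<le> \<delta> powr \<alpha>)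
      \<and> prob_space \<nu> \<and> sets \<nu> = sets borel \<and> measure \<nu> (cball 0 K) = 1
      \<and> (\<integral>\<zeta>\<in>cball 0 (2 / \<delta>). cmod (fourier_meas \<nu> \<zeta>) \<partial>lborel) \<le> \<delta> powr (-\<beta>)
      \<and> norm \<xi> \<in> {1 / (2 * \<delta>) .. 1 / \<delta>})
     \<longrightarrow> (\<integral>x. cmod (fourier_meas \<nu> (coord_mult x \<xi>)) \<partial>\<mu>)
           \<le> c * \<delta> powr ((\<alpha> - \<beta>) / (real CARD('n) + 2))"
proof -
  define C where "C = (2 * real CARD('n)) ^ CARD('n) / unit_ball_vol CARD('n) + 2 * pi * K"
  have C: "1 \<le> C"
    unfolding C_def using assms pi_ge_two mult_mono[of 2 pi 2 K] by (intro add_increasing) auto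
  show ?thesis
  proof (intro exI[of _ C] allI impI, elim conjE)
    fix \<alpha> \<beta> \<delta> :: real and \<mu> \<nu> :: "(real^'n) measure" and \<xi> :: "real^'n"
    assume \<alpha>\<beta>: "\<alpha> > \<beta>" "\<beta> > 0" and \<delta>: "\<delta> > 0"
      and \<mu>: "prob_space \<mu>" "sets \<mu> = sets borel" "measure \<mu> (cball 0 1) = 1"
      and slab: "\<forall>j. \<forall>a. measure \<mu> {x. x $ j \<in> {a - \<delta> .. a + \<delta>}} \<le> \<delta> powr \<alpha>"
      and \<nu>: "prob_space \<nu>" "sets \<nu> = sets borel" "measure \<nu> (cball 0 K) = 1"
      and decay: "(\<integral>\<zeta>\<in>cball 0 (2 / \<delta>). cmod (fourier_meas \<nu> \<zeta>) \<partial>lborel) \<le> \<delta> powr (-\<beta>)"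
      and \<xi>: "norm \<xi> \<in> {1 / (2 * \<delta>) .. 1 / \<delta>}"
    show "(\<integral>x. cmod (fourier_meas \<nu> (coord_mult x \<xi>)) \<partial>\<mu>) \<le> C * \<delta> powr ((\<alpha> - \<beta>) / (real CARD('n) + 2))"
    proof (cases "\<delta> \<le> 1")
      case True
      then show ?thesis
        unfolding C_def using slab \<xi>
        by (intro integral_norm_fourier_coord_mult_le_powr[OF \<nu> \<mu> _ decay \<alpha>\<beta>(1) \<delta>]) auto
    next
      case False
      have "(\<integral>x. cmod (fourier_meas \<nu> (coord_mult x \<xi>)) \<partial>\<mu>) \<le> 1"
        by (rule integral_norm_fourier_meas_le_1[OF \<mu>(1) \<nu>(1,2)])
      also have "1 \<le> C * \<delta> powr ((\<alpha> - \<beta>) / (real CARD('n) + 2))"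
        using C mult_mono[OF C ge_one_powr_ge_zero, of \<delta> "(\<alpha> - \<beta>) / (real CARD('n) + 2)"] False \<alpha>\<beta>
        by simp
      finally show ?thesis .
    qed
  qed
qed

end
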